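(* Let $V$ be a vertex algebra, $M_1,M_2,M_3$ be $V$-modules and $\mathcal{Y}$ an intertwining operator of type $\binom{M_3}{M_1\ M_2}$. Then for all $v\in V$, $a\in M_1$, $b\in M_2$: (v) $[v_\lambda(a\cdot b)]=a\cdot[v_\lambda b]+[v_\lambda a]\cdot b+\int_0^\lambda[[v_\lambda a]_\mu b]^0\,d\mu$; (vi) $[(v\cdot a)_\lambda b]=(e^{T\partial_\lambda}v)[a_\lambda b]+(e^{T\partial_\lambda}a)[v_\lambda b]+\int_0^\lambda[a_\mu[v_{\lambda-\mu}b]]\,d\mu$; (vii) $[a_\lambda(v\cdot b)]=v\cdot[a_\lambda b]+[a_\lambda v]\cdot b+\int_0^\lambda[[a_\lambda v]_\mu b]\,d\mu$.
   Context: Notation: for $n\in\mathbb{C}$, $\lambda^{(n)}:=\lambda^n/\Gamma(n+1)$ with $1/\Gamma$ the entire reciprocal Gamma function (so $\lambda^{(n)}=0$ for $n\in\mathbb{Z}_{<0}$, $\lambda^{(n)}=\lambda^n/n!$ for $n\in\mathbb{Z}_{\ge0}$); $T^{(j)}:=T^j/j!$. Fix $S\subset\mathbb{C}$ with $S+\mathbb{Z}=S$, $S/\mathbb{Z}$ finite; $U[[z]]z^{-S}$ denotes formal sums $\sum_nf_nz^n$ with $n$ in a finite union of sets $-d+\mathbb{Z}_{\ge0}$, $d\in S$; the formal Fourier transform is $F^\lambda_z(\sum_nu_nz^{-n-1})=\sum_nu_n\lambda^{(n)}$. A vertex algebra $V$ has vacuum $\mathbf 1$, fields $Y(v,z)=\sum_{n\in\mathbb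 Z}v_{(n)}z^{-n-1}$ and translation operator $T$. A $V$-module is a vector space $M$ with $T\in\mathrm{End}(M)$ and $Y^M(v,z)=\sum_{n\in\mathbb Z}v_{(n)}z^{-n-1}\in\mathrm{Hom}(M,M((z)))$ such that $Y^M(\mathbf 1,z)=\mathrm{id}_M$, $[T,Y^M(v,z)]=\partial_zY^M(v,z)$, and the Borcherds identity below holds with $\mathcal Y=Y^M$ and $k\in\mathbb Z$. An intertwining operator of type $\binom{M_3}{M_1\ M_2}$ is a linear map $M_1\to\mathrm{Hom}(M_2,M_3[[z]]z^{-S})$, $a\mapsto\mathcal Y(a,z)=\sum_{n\in\mathbb C}a_{(n)}z^{-n-1}$, such that (I1) $T\mathcal Y(a,z)-\mathcal Y(a,z)T=\mathcal Y(Ta,z)=\partial_z\mathcal Y(a,z)$, and (I2) for all $v\in V,a\in M_1,b\in M_2$, $n,m\in\mathbb Z$, $k\in\mathbb C$: $\sum_{j\ge0}(-1)^j\binom nj\big(v_{(m+n-j)}a_{(k+j)}b-(-1)^na_{(n+k-j)}v_{(m+j)}b\big)=\sum_{j\ge0}\binom mj(v_{(n+j)}a)_{(m+k-j)}b$. Brackets and products: for a $V$-module $M$, $v\in V$, $c\in M$: $[v_\lambda c]:=\sum_{j\in\mathbb Z_{\ge0}}\lambda^{(j)}v_{(j)}c$ and $v\cdot c:=v_{(-1)}c$. For $a\in M_1,b\in M_2$: $[a_\lambda b]:=F^\lambda_z(\mathcal Y(a,z)b)=\sum_{n\in\mathbb C}\lambda^{(n)}a_{(n)}b$, $[a_\lambda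 b]^0:=\sum_{n\in\mathbb Z_{\ge0}}\lambda^{(n)}a_{(n)}b$, and $a\cdot b:=a_{(-1)}b$. All brackets and products are extended coefficientwise to expressions depending polynomially or as series on auxiliary variables; e.g. $[v_{\lambda-\mu}b]:=\sum_{j\ge0}(\lambda-\mu)^{(j)}v_{(j)}b$ with $(\lambda-\mu)^{(j)}=(\lambda-\mu)^j/j!$. For $x\in V$ or $x\in M_1$ and an expression $P(\lambda)$: $(e^{T\partial_\lambda}x)P(\lambda):=\sum_{j\ge0}(T^{(j)}x)\cdot\partial_\lambda^jP(\lambda)$. $[a_\lambda v]:=-[v_{-\lambda-T}a]:=-\sum_{j\ge0}\frac{(-\lambda-T)^j}{j!}(v_{(j)}a)\in M_1[\lambda]$, with $T$ acting on $M_1$. The formal integral $\int_0^\lambda\cdot\,d\mu$ acts on formal linear combinations of powers $\mu^c$ ($c\in\mathbb C$) with coefficients possibly depending on $\lambda$ (treated as constants; polynomial factors in $\lambda-\mu$ are expanded first): $\int_0^\lambda\mu^{(c)}d\mu:=\lambda^{(c+1)}$ for $c\in\mathbb C\setminus\mathbb Z_{<0}$, and $\int_0^\lambda\mu^cd\mu:=0$ for $c\in\mathbb Z_{<0}$. *)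

theory Defs
  imports "HOL-Analysis.Gamma_Function" "HOL-Library.Groups_Big_Fun"
begin

text \<open>All vector spaces are complex vector spaces, given by an explicit scalar
multiplication (HOL's vector_space locale).  Fields are encoded by their modes:
an integer- (resp. complex-) indexed family v_(n) c.

Formal expressions in lambda are encoded by coefficient functions
P :: complex => 'a, P c being the coefficient of the plain power lambda^c
(so lambda^(n) = rGamma(n+1) lambda^n).  Expressions in lambda and mu are encoded
by Q :: complex => complex => 'a, Q p q being the coefficient of lambda^p mu^q.
Infinite formal sums are collected coefficientwise with Sum_any (the sum over
the finitely many nonzero terms).\<close>

definition bilin ::
  "(complex \<Rightarrow> 'a::ab_group_add \<Rightarrow> 'a) \<Rightarrow> (complex \<Rightarrow> 'b::ab_group_add \<Rightarrow> 'b)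
   \<Rightarrow> (complex \<Rightarrow> 'c::ab_group_add \<Rightarrow> 'c) \<Rightarrow> ('a \<Rightarrow> 'b \<Rightarrow> 'c) \<Rightarrow> bool" where
  "bilin s1 s2 s3 f \<longleftrightarrow>
     (\<forall>x. Vector_Spaces.linear s2 s3 (f x)) \<and> (\<forall>y. Vector_Spaces.linear s1 s3 (\<lambda>x. f x y))"

definition truncated :: "(int \<Rightarrow> 'v \<Rightarrow> 'm \<Rightarrow> 'm::zero) \<Rightarrow> bool" where
  "truncated act \<longleftrightarrow> (\<forall>v c. \<exists>N. \<forall>n\<ge>N. act n v c = 0)"

text \<open>Borcherds identity for an operator Yop of type (M3 / M1 M2), with
k ranging over the index ring 'k (int for modules, complex for intertwiners).\<close>
definition borcherds ::
  "(complex \<Rightarrow> 'm3::ab_group_add \<Rightarrow> 'm3) \<Rightarrow> (int \<Rightarrow> 'v \<Rightarrow> 'm1 \<Rightarrow> 'm1)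
   \<Rightarrow> (int \<Rightarrow> 'v \<Rightarrow> 'm2 \<Rightarrow> 'm2) \<Rightarrow> (int \<Rightarrow> 'v \<Rightarrow> 'm3 \<Rightarrow> 'm3)
   \<Rightarrow> ('k::comm_ring_1 \<Rightarrow> 'm1 \<Rightarrow> 'm2 \<Rightarrow> 'm3) \<Rightarrow> bool" where
  "borcherds s3 act1 act2 act3 Yop \<longleftrightarrow>
    (\<forall>v a b (n::int) (m::int) (k::'k).
       (\<Sum>j::nat. s3 ((-1)^j * (of_int n gchoose j))
           (act3 (m + n - int j) v (Yop (k + of_nat j) a b)
            - s3 ((-1)^(nat \<bar>n\<bar>)) (Yop (of_int n + k - of_nat j) a (act2 (m + int j) v b))))
     = (\<Sum>j::nat. s3 (of_int m gchoose j) (Yop (of_int m + k - of_nat j) (act1 (n + int j) v a) b)))"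

definition vertex_algebra ::
  "(complex \<Rightarrow> 'v::ab_group_add \<Rightarrow> 'v) \<Rightarrow> 'v \<Rightarrow> ('v \<Rightarrow> 'v) \<Rightarrow> (int \<Rightarrow> 'v \<Rightarrow> 'v \<Rightarrow> 'v) \<Rightarrow> bool" where
  "vertex_algebra sV vac TV Y \<longleftrightarrow>
     vector_space sV \<and> Vector_Spaces.linear sV sV TV \<and> (\<forall>n. bilin sV sV sV (Y n)) \<and> truncated Y \<and>
     (\<forall>n w. Y n vac w = (if n = -1 then w else 0)) \<and>
     (\<forall>v. Y (-1) v vac = v) \<and> (\<forall>v n. n \<ge> 0 \<longrightarrow> Y n v vac = 0) \<and> TV vac = 0 \<and>
     (\<forall>n v w. TV (Y n v w) - Y n v (TV w) = sV (- of_int n) (Y (n - 1) v w)) \<and>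
     borcherds sV Y Y Y Y"

definition va_module ::
  "(complex \<Rightarrow> 'v::ab_group_add \<Rightarrow> 'v) \<Rightarrow> 'v \<Rightarrow> (int \<Rightarrow> 'v \<Rightarrow> 'v \<Rightarrow> 'v)
   \<Rightarrow> (complex \<Rightarrow> 'm::ab_group_add \<Rightarrow> 'm) \<Rightarrow> ('m \<Rightarrow> 'm) \<Rightarrow> (int \<Rightarrow> 'v \<Rightarrow> 'm \<Rightarrow> 'm) \<Rightarrow> bool" where
  "va_module sV vac Y sM TM act \<longleftrightarrow>
     vector_space sM \<and> Vector_Spaces.linear sM sM TM \<and> (\<forall>n. bilin sV sM sM (act n)) \<and>
     truncated act \<and>
     (\<forall>n c. act n vac c = (if n = -1 then c else 0)) \<and>
     (\<forall>n v c. TM (act n v c) - act n v (TM c) = sM (- of_int n) (act (n - 1) v c)) \<and>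
     borcherds sM Y act act act"

text \<open>Intertwining operator of type (M3 / M1 M2): a_(n) b = Yi n a b, n complex,
with Y(a,z) b in M3[[z]] z^(-S).\<close>
definition intertwining ::
  "complex set \<Rightarrow> (complex \<Rightarrow> 'm1::ab_group_add \<Rightarrow> 'm1) \<Rightarrow> (complex \<Rightarrow> 'm2::ab_group_add \<Rightarrow> 'm2)
   \<Rightarrow> (complex \<Rightarrow> 'm3::ab_group_add \<Rightarrow> 'm3) \<Rightarrow> ('m1 \<Rightarrow> 'm1) \<Rightarrow> ('m2 \<Rightarrow> 'm2) \<Rightarrow> ('m3 \<Rightarrow> 'm3)
   \<Rightarrow> (int \<Rightarrow> 'v \<Rightarrow> 'm1 \<Rightarrow> 'm1) \<Rightarrow> (int \<Rightarrow> 'v \<Rightarrow> 'm2 \<Rightarrow> 'm2) \<Rightarrow> (int \<Rightarrow> 'v \<Rightarrow> 'm3 \<Rightarrow> 'm3)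
   \<Rightarrow> (complex \<Rightarrow> 'm1 \<Rightarrow> 'm2 \<Rightarrow> 'm3) \<Rightarrow> bool" where
  "intertwining S s1 s2 s3 T1 T2 T3 act1 act2 act3 Yi \<longleftrightarrow>
     (\<forall>n. bilin s1 s2 s3 (Yi n)) \<and>
     (\<forall>a b. \<exists>D. finite D \<and> D \<subseteq> S \<and>
        (\<forall>n. Yi n a b \<noteq> 0 \<longrightarrow> (\<exists>d\<in>D. \<exists>k::nat. n = d - 1 - of_nat k))) \<and>
     (\<forall>n a b. T3 (Yi n a b) - Yi n a (T2 b) = Yi n (T1 a) b) \<and>
     (\<forall>n a b. Yi n (T1 a) b = s3 (- n) (Yi (n - 1) a b)) \<and>
     borcherds s3 act1 act2 act3 Yi"

text \<open>[v_lambda c] = sum_(j>=0) lambda^(j) v_(j) c\<close>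
definition lbr :: "(complex \<Rightarrow> 'm \<Rightarrow> 'm) \<Rightarrow> (int \<Rightarrow> 'v \<Rightarrow> 'm \<Rightarrow> 'm::zero) \<Rightarrow> 'v \<Rightarrow> 'm \<Rightarrow> complex \<Rightarrow> 'm" where
  "lbr s act v c = (\<lambda>p. if p \<in> \<nat> then s (rGamma (p + 1)) (act \<lfloor>Re p\<rfloor> v c) else 0)"

text \<open>[v_(lambda-mu) c] = sum_j (lambda-mu)^(j) v_(j) c, expanded:
coefficient of lambda^p mu^q is (-1)^q/(p! q!) v_(p+q) c.\<close>
definition lbr_diff ::
  "(complex \<Rightarrow> 'm \<Rightarrow> 'm) \<Rightarrow> (int \<Rightarrow> 'v \<Rightarrow> 'm \<Rightarrow> 'm::zero) \<Rightarrow> 'v \<Rightarrow> 'm \<Rightarrow> complex \<Rightarrow> complex \<Rightarrow> 'm" where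
  "lbr_diff s act v c = (\<lambda>p q. if p \<in> \<nat> \<and> q \<in> \<nat>
      then s ((-1)^(nat \<lfloor>Re q\<rfloor>) * rGamma (p + 1) * rGamma (q + 1)) (act (\<lfloor>Re p\<rfloor> + \<lfloor>Re q\<rfloor>) v c)
      else 0)"

text \<open>[a_lambda b] = sum_(n in C) lambda^(n) a_(n) b\<close>
definition ibr :: "(complex \<Rightarrow> 'm3 \<Rightarrow> 'm3) \<Rightarrow> (complex \<Rightarrow> 'm1 \<Rightarrow> 'm2 \<Rightarrow> 'm3) \<Rightarrow> 'm1 \<Rightarrow> 'm2 \<Rightarrow> complex \<Rightarrow> 'm3" where
  "ibr s Yi a b = (\<lambda>p. s (rGamma (p + 1)) (Yi p a b))"

text \<open>[a_lambda b]^0 = sum_(n in Z>=0) lambda^(n) a_(n) b\<close>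
definition ibr0 :: "(complex \<Rightarrow> 'm3 \<Rightarrow> 'm3) \<Rightarrow> (complex \<Rightarrow> 'm1 \<Rightarrow> 'm2 \<Rightarrow> 'm3::zero) \<Rightarrow> 'm1 \<Rightarrow> 'm2 \<Rightarrow> complex \<Rightarrow> 'm3" where
  "ibr0 s Yi a b = (\<lambda>p. if p \<in> \<nat> then s (rGamma (p + 1)) (Yi p a b) else 0)"

text \<open>[a_mu X] for X an expression in lambda, mu (polynomial in mu) with coefficients
in M2, extended coefficientwise: mu^q [a_mu x] = sum_n mu^q mu^(n) a_(n) x.\<close>
definition ibr_mu ::
  "(complex \<Rightarrow> 'm3 \<Rightarrow> 'm3) \<Rightarrow> (complex \<Rightarrow> 'm1 \<Rightarrow> 'm2 \<Rightarrow> 'm3::comm_monoid_add) \<Rightarrow> 'm1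
   \<Rightarrow> (complex \<Rightarrow> complex \<Rightarrow> 'm2) \<Rightarrow> complex \<Rightarrow> complex \<Rightarrow> 'm3" where
  "ibr_mu s Yi a X = (\<lambda>p r. \<Sum>q. s (rGamma (r - q + 1)) (Yi (r - q) a (X p q)))"

text \<open>[a_lambda v] := - [v_(-lambda-T) a] = - sum_j (-lambda-T)^j/j! (v_(j) a) in M1[lambda].\<close>
definition ibr_rev ::
  "(complex \<Rightarrow> 'm1 \<Rightarrow> 'm1) \<Rightarrow> ('m1 \<Rightarrow> 'm1) \<Rightarrow> (int \<Rightarrow> 'v \<Rightarrow> 'm1 \<Rightarrow> 'm1::ab_group_add) \<Rightarrow> 'm1 \<Rightarrow> 'v
   \<Rightarrow> complex \<Rightarrow> 'm1" where
  "ibr_rev s T act a v = (\<lambda>p. if p \<in> \<nat> then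
      - (\<Sum>j::nat. if nat \<lfloor>Re p\<rfloor> \<le> j
           then s ((-1)^j * of_nat (j choose nat \<lfloor>Re p\<rfloor>) / fact j)
                  ((T ^^ (j - nat \<lfloor>Re p\<rfloor>)) (act (int j) v a))
           else 0)
      else 0)"

text \<open>j-th derivative in lambda: d^j lambda^c = c(c-1)...(c-j+1) lambda^(c-j).\<close>
definition ser_deriv :: "(complex \<Rightarrow> 'a \<Rightarrow> 'a) \<Rightarrow> nat \<Rightarrow> (complex \<Rightarrow> 'a) \<Rightarrow> complex \<Rightarrow> 'a" where
  "ser_deriv s j P = (\<lambda>p. s (pochhammer (p + 1) j) (P (p + of_nat j)))"

text \<open>(e^(T d_lambda) x) P(lambda) = sum_j (T^(j) x) . d_lambda^j P(lambda), where
dot x y is the product x . y (i.e. the (-1)-mode).\<close>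
definition eTd ::
  "(complex \<Rightarrow> 'x \<Rightarrow> 'x) \<Rightarrow> (complex \<Rightarrow> 'a \<Rightarrow> 'a) \<Rightarrow> ('x \<Rightarrow> 'a \<Rightarrow> 'b::comm_monoid_add) \<Rightarrow> ('x \<Rightarrow> 'x)
   \<Rightarrow> 'x \<Rightarrow> (complex \<Rightarrow> 'a) \<Rightarrow> complex \<Rightarrow> 'b" where
  "eTd sx sa dot T x P = (\<lambda>p. \<Sum>j::nat. dot (sx (1 / fact j) ((T ^^ j) x)) (ser_deriv sa j P p))"

text \<open>Formal integral int_0^lambda . d mu on an expression Q(lambda,mu):
lambda^p mu^c |-> lambda^(p+c+1)/(c+1) for c not a negative integer, and 0 otherwise
(equivalently mu^(c) |-> lambda^(c+1)).\<close>
definition fint ::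
  "(complex \<Rightarrow> 'a \<Rightarrow> 'a) \<Rightarrow> (complex \<Rightarrow> complex \<Rightarrow> 'a::comm_monoid_add) \<Rightarrow> complex \<Rightarrow> 'a" where
  "fint s Q = (\<lambda>e. \<Sum>c. if c \<in> {of_int k | k. k < 0} then 0 else s (1 / (c + 1)) (Q (e - c - 1) c))"

end

theory Submission
  imports Defs
begin

text \<open>
  All three identities are equalities of formal series in \<open>\<lambda>\<close> and are proved coefficientwise,
  at a fixed exponent \<open>e\<close>. The Borcherds identity for the intertwining operator, specialised to
  \<open>(m, n) = (M, 0)\<close>, \<open>(0, -1)\<close> and \<open>(-1, 0)\<close>, writes the left-hand side as a finite
  combination of modes \<open>Yi (e - 1 - j)\<close> applied to \<open>v\<^sub>(\<^sub>j\<^sub>) a, b\<close> resp. \<open>a, v\<^sub>(\<^sub>j\<^sub>) b\<close>.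
  On the right-hand side the formal integral contributes to each such mode a beta-type sum, which
  by the partial fraction identity
  \<open>\<Sum>\<^sub>k (j choose k) (-1)\<^sup>k / (x + k) = j! / (x (x + 1) \<cdots> (x + j))\<close>
  collapses to the coefficient \<open>rGamma (e + 1)\<close> of \<open>\<lambda>\<^sup>(\<^sup>e\<^sup>)\<close>, except when \<open>e - 1 - j\<close> is a negative
  integer, where the formal integral has no term. Exactly these missing modes are supplied by the
  summands \<open>(e\<^sup>T\<^sup>\<partial> a)[v\<^sub>\<lambda> b]\<close> in (vi) and \<open>[a\<^sub>\<lambda> v]\<cdot>b\<close> in (vii); in (v) the integral
  supplies the binomial terms \<open>j < M\<close> of the commutator formula.
\<close>

section \<open>Binomial sums and the reciprocal Gamma function\<close>

text \<open>The exceptional set of the formal integral in \<open>fint_def\<close>; an abbreviation, so that it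
  matches that definition syntactically.\<close>

abbreviation negative_Ints :: "complex set" where
  "negative_Ints \<equiv> {of_int k |k. k < 0}"

lemma of_int_in_negative_Ints_iff: "(of_int m :: complex) \<in> negative_Ints \<longleftrightarrow> m < 0"
  by (auto simp: of_int_eq_iff)

lemma of_nat_notin_negative_Ints: "(of_nat i :: complex) \<notin> negative_Ints"
  using of_int_in_negative_Ints_iff[of "int i"] by simp

lemma negative_Ints_iff_nonpos_Ints: "c \<in> negative_Ints \<longleftrightarrow> c + 1 \<in> \<int>\<^sub>\<le>\<^sub>0"
proof
  assume "c \<in> negative_Ints"
  then obtain k where k: "c = of_int k" "k < 0" by auto
  then have "c + 1 = of_int (k + 1)" by simp
  then show "c + 1 \<in> \<int>\<^sub>\<le>\<^sub>0" using k by (metis nonpos_Ints_of_int zless_imp_add1_zle add.commute)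
next
  assume "c + 1 \<in> \<int>\<^sub>\<le>\<^sub>0"
  then obtain n where "c + 1 = - of_nat n" by (auto elim!: nonpos_Ints_cases')
  then have "c = of_int (- int n - 1)" by (simp add: algebra_simps eq_neg_iff_add_eq_0)
  then show "c \<in> negative_Ints" by fastforce
qed

lemma rGamma_negative_Ints_plus_one: "c \<in> negative_Ints \<Longrightarrow> rGamma (c + 1) = 0"
  by (metis negative_Ints_iff_nonpos_Ints rGamma_nonpos_Int)

lemma of_nat_diff_in_negative_Ints_iff:
  "(of_nat r - 1 - of_nat j :: complex) \<in> negative_Ints \<longleftrightarrow> r \<le> j"
  using of_int_in_negative_Ints_iff[of "int r - 1 - int j"] by auto

lemma rGamma_plus_one_eq_0_if_not_Nats:
  assumes "(e :: complex) \<notin> \<nat>" "e - 1 - of_nat j \<in> negative_Ints"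
  shows "rGamma (e + 1) = 0"
proof -
  obtain k where k: "e - 1 - of_nat j = of_int k" "k < 0" using assms(2) by auto
  then have e: "e = of_int (k + 1 + int j)" by (simp add: algebra_simps)
  have "k + 1 + int j < 0"
  proof (rule ccontr)
    assume "\<not> k + 1 + int j < 0"
    then have "e = of_nat (nat (k + 1 + int j))" using e by simp
    with assms(1) show False by simp
  qed
  then have "e \<in> negative_Ints" using e by blast
  then show ?thesis by (rule rGamma_negative_Ints_plus_one)
qed

lemma rGamma_of_nat_plus_one: "rGamma (of_nat n + 1 :: complex) = inverse (fact n)"
  using Gamma_fact[of n, where 'a=complex] by (simp add: rGamma_inverse_Gamma add.commute)

lemma floor_Re_of_nat [simp]: "\<lfloor>Re (of_nat r :: complex)\<rfloor> = int r"
  by (metis Re_complex_of_real floor_of_nat of_real_of_nat_eq)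

lemma sum_lessThan_triangle_swap:
  fixes f :: "nat \<Rightarrow> nat \<Rightarrow> 'a::comm_monoid_add"
  shows "(\<Sum>r<N. \<Sum>j<N. if r \<le> j then f j r else 0) = (\<Sum>j<(N::nat). \<Sum>r\<le>j. f j r)"
proof -
  have "(\<Sum>r<N. if r \<le> j then f j r else 0) = (\<Sum>r\<le>j. f j r)" if "j < N" for j
  proof -
    have "(\<Sum>r<N. if r \<le> j then f j r else 0) = (\<Sum>r\<in>{..<N} \<inter> {r. r \<le> j}. f j r)"
      by (simp add: sum.inter_restrict)
    also have "{..<N} \<inter> {r. r \<le> j} = {..j}" using that by auto
    finally show ?thesis .
  qed
  then show ?thesis by (subst sum.swap) simp
qed

lemma sum_lessThan_square_antidiagonal:
  fixes h :: "nat \<Rightarrow> nat \<Rightarrow> 'a::comm_monoid_add"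
  assumes "\<And>p q. N \<le> p + q \<Longrightarrow> h p q = 0"
  shows "(\<Sum>p<N. \<Sum>q<N. h p q) = (\<Sum>j<N. \<Sum>q\<le>j. h (j - q) q)"
proof -
  have "(\<Sum>p<N. \<Sum>q<N. h p q) = (\<Sum>(q, p)\<in>{..<N} \<times> {..<N}. h p q)"
    by (subst sum.swap) (rule sum.cartesian_product)
  also have "\<dots> = (\<Sum>(q, p)\<in>{(q, p). q + p < N}. h p q)"
    by (rule sum.mono_neutral_right) (auto, metis assms add.commute not_le)
  also have "\<dots> = (\<Sum>j<N. \<Sum>q\<le>j. h (j - q) q)"
    by (rule sum.triangle_reindex)
  finally show ?thesis .
qed

lemma sum_if_add_sum_if_not:
  "(\<Sum>j\<in>A. if P j then f j else 0) + (\<Sum>j\<in>A. if P j then 0 else f j) = (\<Sum>j\<in>A. f j)"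
  unfolding sum.distrib[symmetric] by (rule sum.cong) simp_all

lemma alternating_binomial_sum_Suc:
  fixes g :: "nat \<Rightarrow> 'a::comm_ring_1"
  shows "(\<Sum>k\<le>Suc j. of_nat (Suc j choose k) * (-1)^k * g k)
       = (\<Sum>k\<le>j. of_nat (j choose k) * (-1)^k * g k)
         - (\<Sum>k\<le>j. of_nat (j choose k) * (-1)^k * g (Suc k))"
proof -
  have shift: "(\<Sum>k\<le>j. of_nat (j choose k) * (-1)^k * g k)
      = g 0 - (\<Sum>k\<le>j. of_nat (j choose Suc k) * (-1)^k * g (Suc k))"
  proof -
    have "(\<Sum>k\<le>j. of_nat (j choose k) * (-1)^k * g k) = (\<Sum>k\<le>Suc j. of_nat (j choose k) * (-1)^k * g k)"
      by (simp add: binomial_eq_0)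
    also have "\<dots> = g 0 - (\<Sum>k\<le>j. of_nat (j choose Suc k) * (-1)^k * g (Suc k))"
      by (subst sum.atMost_Suc_shift) (simp add: sum_negf[symmetric] binomial_eq_0)
    finally show ?thesis .
  qed
  have "(\<Sum>k\<le>Suc j. of_nat (Suc j choose k) * (-1)^k * g k)
      = g 0 + (\<Sum>k\<le>j. - (of_nat (j choose k) * (-1)^k * g (Suc k))
                          - of_nat (j choose Suc k) * (-1)^k * g (Suc k))"
    by (subst sum.atMost_Suc_shift) (simp add: algebra_simps)
  also have "\<dots> = g 0 - (\<Sum>k\<le>j. of_nat (j choose k) * (-1)^k * g (Suc k))
            - (\<Sum>k\<le>j. of_nat (j choose Suc k) * (-1)^k * g (Suc k))"
    by (simp add: sum_subtractf sum_negf)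
  also have "\<dots> = (\<Sum>k\<le>j. of_nat (j choose k) * (-1)^k * g k)
                    - (\<Sum>k\<le>j. of_nat (j choose k) * (-1)^k * g (Suc k))"
    unfolding shift by (simp add: algebra_simps)
  finally show ?thesis .
qed

lemma alternating_binomial_reciprocal_sum:
  fixes x :: "'a::field_char_0"
  assumes "x \<notin> \<int>\<^sub>\<le>\<^sub>0"
  shows "(\<Sum>k\<le>j. of_nat (j choose k) * (-1)^k * inverse (x + of_nat k)) * pochhammer x (Suc j) = fact j"
  using assms
proof (induction j arbitrary: x)
  case 0
  then have "x \<noteq> 0" by auto
  then show ?case by simp
next
  case (Suc j)
  let ?F = "\<lambda>x. \<Sum>k\<le>j. of_nat (j choose k) * (-1)^k * inverse (x + of_nat k)"
  have "x + 1 \<notin> \<int>\<^sub>\<le>\<^sub>0"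
    using Suc.prems nonpos_Ints_diff_Nats[of "x + 1" 1] by auto
  then have IH': "?F (x + 1) * pochhammer (x + 1) (Suc j) = fact j"
    using Suc.IH by blast
  have F_Suc: "(\<Sum>k\<le>Suc j. of_nat (Suc j choose k) * (-1)^k * inverse (x + of_nat k)) = ?F x - ?F (x + 1)"
    by (subst alternating_binomial_sum_Suc) (simp add: add_ac)
  have "?F x * pochhammer x (Suc (Suc j)) = fact j * (x + of_nat (Suc j))"
    using Suc.IH[OF Suc.prems] unfolding pochhammer_Suc[of x "Suc j"] by (simp only: mult.assoc[symmetric])
  moreover have "?F (x + 1) * pochhammer x (Suc (Suc j)) = fact j * x"
    using IH' unfolding pochhammer_rec[of x "Suc j"] by (simp add: mult_ac)
  ultimately show ?case
    unfolding F_Suc by (simp add: algebra_simps)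
qed

lemma rGamma_alternating_binomial_reciprocal_sum:
  "rGamma x * (\<Sum>k\<le>j. of_nat (j choose k) * (-1)^k * inverse (x + of_nat k))
     = (if (x :: complex) \<in> \<int>\<^sub>\<le>\<^sub>0 then 0 else fact j * rGamma (x + of_nat (Suc j)))"
proof (cases "x \<in> \<int>\<^sub>\<le>\<^sub>0")
  case False
  have "rGamma x = pochhammer x (Suc j) * rGamma (x + of_nat (Suc j))"
    by (rule pochhammer_rGamma)
  then show ?thesis
    using alternating_binomial_reciprocal_sum[OF False, of j] False by (simp add: mult_ac)
qed (simp add: rGamma_nonpos_Int)

text \<open>Coefficient form of \<open>\<integral>\<^sub>0\<^sup>\<lambda> \<mu>\<^sup>(\<^sup>n\<^sup>) (\<lambda> - \<mu>)\<^sup>(\<^sup>j\<^sup>) d\<mu> = \<lambda>\<^sup>(\<^sup>n\<^sup>+\<^sup>j\<^sup>+\<^sup>1\<^sup>)\<close> with \<open>n = e - 1 - j\<close>,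
  the integral in (vi).\<close>

lemma beta_sum_rGamma:
  fixes e :: complex
  shows "(\<Sum>q\<le>j. 1 / (e - of_nat (j - q)) * rGamma (e - of_nat j)
                    * ((-1)^q * rGamma (of_nat (j - q) + 1) * rGamma (of_nat q + 1)))
       = (if e - 1 - of_nat j \<in> negative_Ints then 0 else rGamma (e + 1))"
proof -
  define x where "x = e - of_nat j"
  have "(\<Sum>q\<le>j. 1 / (e - of_nat (j - q)) * rGamma (e - of_nat j)
                    * ((-1)^q * rGamma (of_nat (j - q) + 1) * rGamma (of_nat q + 1)))
      = 1 / fact j * (rGamma x * (\<Sum>q\<le>j. of_nat (j choose q) * (-1)^q * inverse (x + of_nat q)))"
    unfolding sum_distrib_left
  proof (rule sum.cong[OF refl])
    fix q assume "q \<in> {..j}"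
    then have q: "q \<le> j" by simp
    then have shift: "e - of_nat (j - q) = x + of_nat q" by (simp add: x_def of_nat_diff)
    show "1 / (e - of_nat (j - q)) * rGamma (e - of_nat j)
            * ((-1)^q * rGamma (of_nat (j - q) + 1) * rGamma (of_nat q + 1))
        = 1 / fact j * (rGamma x * (of_nat (j choose q) * (-1)^q * inverse (x + of_nat q)))"
      unfolding shift x_def[symmetric] rGamma_of_nat_plus_one binomial_fact[OF q] by (simp add: field_simps)
  qed
  also have "\<dots> = (if e - 1 - of_nat j \<in> negative_Ints then 0 else rGamma (e + 1))"
    unfolding rGamma_alternating_binomial_reciprocal_sum negative_Ints_iff_nonpos_Ints
    by (simp add: x_def algebra_simps)
  finally show ?thesis .
qed

text \<open>Coefficient form of the integral in (vii), \<open>\<integral>\<^sub>0\<^sup>\<lambda> \<mu>\<^sup>(\<^sup>e\<^sup>-\<^sup>1\<^sup>-\<^sup>j\<^sup>) (\<lambda> - \<mu>)\<^sup>j d\<mu>\<close>, with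
  \<open>(\<lambda> - \<mu>)\<^sup>j\<close> expanded binomially; \<open>r\<close> is the power of \<open>\<lambda>\<close> in \<open>[a\<^sub>\<lambda> v]\<close>.\<close>

lemma binomial_beta_sum_rGamma:
  fixes e :: complex
  shows "(\<Sum>r\<le>j. 1 / (e - of_nat r) * rGamma (e - of_nat r) * ((-1)^j * of_nat (j choose r) / fact j)
                    * pochhammer (1 + of_nat r - e) (j - r))
       = (if e - 1 - of_nat j \<in> negative_Ints then 0 else (-1)^j * rGamma (e + 1))"
proof -
  define x where "x = e - of_nat j"
  have "(\<Sum>r\<le>j. 1 / (e - of_nat r) * rGamma (e - of_nat r) * ((-1)^j * of_nat (j choose r) / fact j)
                    * pochhammer (1 + of_nat r - e) (j - r))
      = (\<Sum>k\<le>j. 1 / (e - of_nat (j - k)) * rGamma (e - of_nat (j - k))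
                  * ((-1)^j * of_nat (j choose (j - k)) / fact j) * pochhammer (1 + of_nat (j - k) - e) k)"
    by (subst sum.atLeastAtMost_rev[of _ 0 j, unfolded atLeast0AtMost]) (simp del: of_nat_diff)
  also have "\<dots> = (-1)^j / fact j * (rGamma x * (\<Sum>k\<le>j. of_nat (j choose k) * (-1)^k * inverse (x + of_nat k)))"
    unfolding sum_distrib_left
  proof (rule sum.cong[OF refl])
    fix k assume "k \<in> {..j}"
    then have k: "k \<le> j" by simp
    have shift: "e - of_nat (j - k) = x + of_nat k"
      using k by (simp add: x_def of_nat_diff)
    have "1 + of_nat (j - k) - e = - (x + of_nat k - 1)"
      using k by (simp add: x_def of_nat_diff)
    then have "pochhammer (1 + of_nat (j - k) - e) k = pochhammer (- (x + of_nat k - 1)) k"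
      by (simp only:)
    also have "\<dots> = (-1)^k * pochhammer x k"
      unfolding pochhammer_minus by simp
    finally have poch: "pochhammer (1 + of_nat (j - k) - e) k = (-1)^k * pochhammer x k" .
    have "pochhammer x k * rGamma (x + of_nat k) = rGamma x"
      by (simp add: pochhammer_rGamma[of x k])
    then show "1 / (e - of_nat (j - k)) * rGamma (e - of_nat (j - k)) * ((-1)^j * of_nat (j choose (j - k)) / fact j)
                       * pochhammer (1 + of_nat (j - k) - e) k
        = (-1)^j / fact j * (rGamma x * (of_nat (j choose k) * (-1)^k * inverse (x + of_nat k)))"
      unfolding shift poch binomial_symmetric[OF k, symmetric] by (simp add: field_simps)
  qed
  also have "\<dots> = (if e - 1 - of_nat j \<in> negative_Ints then 0 else (-1)^j * rGamma (e + 1))"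
    unfolding rGamma_alternating_binomial_reciprocal_sum negative_Ints_iff_nonpos_Ints
    by (simp add: x_def algebra_simps)
  finally show ?thesis .
qed

section \<open>Formal integrals and the Borcherds identity\<close>

lemma gbinomial_minus_one: "((-1 :: 'a::field_char_0) gchoose k) = (-1)^k"
  using gbinomial_minus[of "1 :: 'a" k] by (simp add: binomial_gbinomial[symmetric])

lemma gbinomial_minus_two: "((-2 :: 'a::field_char_0) gchoose k) = (-1)^k * (of_nat k + 1)"
proof -
  have "Suc k choose k = Suc k"
    using binomial_symmetric[of k "Suc k"] by simp
  then have "((1 + of_nat k :: 'a) gchoose k) = of_nat k + 1"
    using binomial_gbinomial[of "Suc k" k, where 'a='a] by (simp add: add_ac)
  then show ?thesis
    using gbinomial_minus[of "2 :: 'a" k] by (simp add: add_ac)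
qed

lemma (in vector_space) scale_Sum_any: "scale c (Sum_any g) = Sum_any (\<lambda>a. scale c (g a))"
proof (cases "c = 0")
  case False
  then have "{a. scale c (g a) \<noteq> 0} = {a. g a \<noteq> 0}" by auto
  then show ?thesis
    by (cases "finite {a. g a \<noteq> 0}") (simp_all add: Sum_any.expand_set scale_sum_right)
qed simp

lemma fint_eq_sum:
  assumes "vector_space s" "finite R"
    and support: "\<And>c. c \<notin> negative_Ints \<Longrightarrow> Q (e - c - 1) c \<noteq> 0 \<Longrightarrow> \<exists>r\<in>R. c = e - 1 - of_nat r"
  shows "fint s Q e = (\<Sum>r\<in>R. if e - 1 - of_nat r \<in> negative_Ints then 0
                               else s (1 / (e - of_nat r)) (Q (of_nat r) (e - 1 - of_nat r)))"
proof -
  interpret vector_space s by fact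
  define g where "g c = (if c \<in> negative_Ints then 0 else s (1 / (c + 1)) (Q (e - c - 1) c))" for c
  have shift: "e - (e - 1 - of_nat r) - 1 = of_nat r" "e - 1 - of_nat r + 1 = e - of_nat r" for r
    by simp_all
  have "{c. g c \<noteq> 0} \<subseteq> (\<lambda>r. e - 1 - of_nat r) ` R"
    using support by (fastforce simp: g_def split: if_splits)
  then have "fint s Q e = sum g ((\<lambda>r. e - 1 - of_nat r) ` R)"
    unfolding fint_def g_def using assms(2) by (intro Sum_any.expand_superset) auto
  also have "\<dots> = (\<Sum>r\<in>R. g (e - 1 - of_nat r))"
    by (subst sum.reindex) (auto simp: inj_on_def)
  also have "\<dots> = (\<Sum>r\<in>R. if e - 1 - of_nat r \<in> negative_Ints then 0
                               else s (1 / (e - of_nat r)) (Q (of_nat r) (e - 1 - of_nat r)))"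
    unfolding g_def shift ..
  finally show ?thesis .
qed

lemma borcherds_commutator:
  fixes s3 :: "complex \<Rightarrow> 'm3::ab_group_add \<Rightarrow> 'm3"
  assumes "borcherds s3 act1 act2 act3 Yop" "vector_space s3"
  shows "act3 m v (Yop k a b) - Yop k a (act2 m v b)
       = (\<Sum>j::nat. s3 (of_int m gchoose j) (Yop (of_int m + k - of_nat j) (act1 (int j) v a) b))"
proof -
  interpret vector_space s3 by fact
  have B: "(\<Sum>j::nat. s3 ((-1)^j * (of_int 0 gchoose j))
           (act3 (m + 0 - int j) v (Yop (k + of_nat j) a b)
            - s3 ((-1)^(nat \<bar>0\<bar>)) (Yop (of_int 0 + k - of_nat j) a (act2 (m + int j) v b))))
      = (\<Sum>j. s3 (of_int m gchoose j) (Yop (of_int m + k - of_nat j) (act1 (0 + int j) v a) b))"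
    by (rule assms(1)[unfolded borcherds_def, rule_format])
  have E: "(\<lambda>j::nat. s3 ((-1)^j * (of_int 0 gchoose j))
           (act3 (m + 0 - int j) v (Yop (k + of_nat j) a b)
            - s3 ((-1)^(nat \<bar>0\<bar>)) (Yop (of_int 0 + k - of_nat j) a (act2 (m + int j) v b))))
      = (\<lambda>j. if j = 0 then act3 m v (Yop k a b) - Yop k a (act2 m v b) else 0)"
    by (auto simp: fun_eq_iff gbinomial_0_left)
  show ?thesis using B unfolding E by simp
qed

lemma borcherds_minus_one_product:
  fixes s3 :: "complex \<Rightarrow> 'm3::ab_group_add \<Rightarrow> 'm3" and act3 :: "int \<Rightarrow> 'v \<Rightarrow> 'm3 \<Rightarrow> 'm3"
  assumes "borcherds s3 act1 act2 act3 Yop" "vector_space s3"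
  shows "Yop k (act1 (-1) v a) b
       = (\<Sum>j::nat. act3 (-1 - int j) v (Yop (k + of_nat j) a b) + Yop (k - 1 - of_nat j) a (act2 (int j) v b))"
proof -
  interpret vector_space s3 by fact
  have B: "(\<Sum>j::nat. s3 ((-1)^j * (of_int (-1) gchoose j))
           (act3 (0 + -1 - int j) v (Yop (k + of_nat j) a b)
            - s3 ((-1)^(nat \<bar>-1\<bar>)) (Yop (of_int (-1) + k - of_nat j) a (act2 (0 + int j) v b))))
      = (\<Sum>j. s3 (of_int 0 gchoose j) (Yop (of_int 0 + k - of_nat j) (act1 (-1 + int j) v a) b))"
    by (rule assms(1)[unfolded borcherds_def, rule_format])
  have E: "(\<lambda>j::nat. s3 (of_int 0 gchoose j) (Yop (of_int 0 + k - of_nat j) (act1 (-1 + int j) v a) b))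
      = (\<lambda>j. if j = 0 then Yop k (act1 (-1) v a) b else 0)"
    by (auto simp: fun_eq_iff gbinomial_0_left)
  show ?thesis
    using B unfolding E by (simp add: gbinomial_minus_one power_mult_distrib[symmetric] algebra_simps)
qed

lemma vertex_algebra_translation:
  assumes "vertex_algebra sV vac TV Y"
  shows "TV v = Y (-2) v vac"
proof -
  interpret vector_space sV using assms by (simp add: vertex_algebra_def)
  have "module_hom sV sV (Y (-1) v)"
    using assms by (simp add: vertex_algebra_def bilin_def module_hom_iff_linear)
  then have "Y (-1) v 0 = 0" by (rule module_hom.zero)
  moreover have "TV (Y (-1) v vac) - Y (-1) v (TV vac) = sV (- of_int (-1)) (Y (-1 - 1) v vac)"
    using assms unfolding vertex_algebra_def by blast
  moreover have "Y (-1) v vac = v" "TV vac = 0"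
    using assms by (auto simp: vertex_algebra_def)
  ultimately show ?thesis by simp
qed

lemma va_module_vacuum_borcherds_summand:
  assumes M: "va_module sV vac Y s T act"
  shows "s ((-1)^j * (of_int (-2) gchoose j))
           (act (0 + -2 - int j) v (act (k + of_nat j) vac c)
            - s ((-1)^(nat \<bar>-2\<bar>)) (act (of_int (-2) + k - of_nat j) vac (act (0 + int j) v c)))
      = (if j = nat \<bar>k\<bar> - 1 then s (- of_int k) (act (k - 1) v c) else 0)"
proof -
  interpret vector_space s using M by (simp add: va_module_def)
  have act_vac: "act n vac c = (if n = -1 then c else 0)" for n c
    using M by (simp add: va_module_def)
  have "module_hom s s (act n v)" for n v
    using M by (simp add: va_module_def bilin_def module_hom_iff_linear)
  then have act_zero: "act n v 0 = 0" for n v by (rule module_hom.zero)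
  have coeff: "(-1)^j * ((-2 :: complex) gchoose j) = of_nat j + 1"
    by (simp add: gbinomial_minus_two power_mult_distrib[symmetric])
  consider "k < 0" "int j = - 1 - k" | "k > 0" "int j = k - 1" | "int j \<noteq> - 1 - k" "int j \<noteq> k - 1"
    by linarith
  then show ?thesis
  proof cases
    case 1
    moreover have "(of_nat j :: complex) = of_int (- 1 - k)"
      using 1 by (metis of_int_of_nat_eq)
    ultimately have "k = - 1 - int j" "of_nat j + 1 = - (of_int k :: complex)" by simp_all
    moreover have "j = nat \<bar>k\<bar> - 1" using 1 by arith
    ultimately show ?thesis using 1 coeff by (simp add: act_vac)
  next
    case 2
    moreover have "(of_nat j :: complex) = of_int (k - 1)"
      using 2 by (metis of_int_of_nat_eq)
    ultimately have "k = int j + 1" "of_nat j + 1 = (of_int k :: complex)" by simp_all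
    moreover have "j = nat \<bar>k\<bar> - 1" using 2 by arith
    ultimately show ?thesis using 2 coeff by (simp add: act_vac act_zero)
  next
    case 3
    then have "k + of_nat j \<noteq> -1" "of_int (-2) + k - of_nat j \<noteq> -1"
      by simp_all
    moreover have "j \<noteq> nat \<bar>k\<bar> - 1 \<or> k = 0"
      using 3 by arith
    ultimately show ?thesis
      by (auto simp only: act_vac act_zero if_False scale_zero_right scale_zero_left diff_zero
                 of_int_0 minus_zero if_True split: if_splits)
  qed
qed

lemma va_module_act_translation:
  assumes VA: "vertex_algebra sV vac TV Y" and M: "va_module sV vac Y s T act"
  shows "act k (TV v) c = s (- of_int k) (act (k - 1) v c)"
proof -
  interpret vector_space s using M by (simp add: va_module_def)
  have "borcherds s Y act act act"
    using M by (simp add: va_module_def)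
  then have Bo: "(\<Sum>j::nat. s ((-1)^j * (of_int (-2) gchoose j))
           (act (0 + -2 - int j) v (act (k + of_nat j) vac c)
            - s ((-1)^(nat \<bar>-2\<bar>)) (act (of_int (-2) + k - of_nat j) vac (act (0 + int j) v c))))
      = (\<Sum>j::nat. s (of_int 0 gchoose j) (act (of_int 0 + k - of_nat j) (Y (-2 + int j) v vac) c))"
    by (rule borcherds_def[THEN iffD1, rule_format])
  have R: "(\<lambda>j::nat. s (of_int 0 gchoose j) (act (of_int 0 + k - of_nat j) (Y (-2 + int j) v vac) c))
      = (\<lambda>j. if j = 0 then act k (TV v) c else 0)"
    by (auto simp: fun_eq_iff gbinomial_0_left vertex_algebra_translation[OF VA])
  show ?thesis
    using Bo unfolding R va_module_vacuum_borcherds_summand[OF M] by simp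
qed

lemma lbr_diff_of_nat:
  "lbr_diff s act v c (of_nat p) (of_nat q)
     = s ((-1)^q * rGamma (of_nat p + 1) * rGamma (of_nat q + 1)) (act (int (p + q)) v c)"
  by (simp add: lbr_diff_def)

section \<open>The three identities\<close>

locale va_intertwining =
  fixes sV :: "complex \<Rightarrow> 'v::ab_group_add \<Rightarrow> 'v" and vac :: 'v and TV :: "'v \<Rightarrow> 'v"
    and Y :: "int \<Rightarrow> 'v \<Rightarrow> 'v \<Rightarrow> 'v"
    and s1 :: "complex \<Rightarrow> 'm1::ab_group_add \<Rightarrow> 'm1" and T1 :: "'m1 \<Rightarrow> 'm1"
    and act1 :: "int \<Rightarrow> 'v \<Rightarrow> 'm1 \<Rightarrow> 'm1"
    and s2 :: "complex \<Rightarrow> 'm2::ab_group_add \<Rightarrow> 'm2" and T2 :: "'m2 \<Rightarrow> 'm2"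
    and act2 :: "int \<Rightarrow> 'v \<Rightarrow> 'm2 \<Rightarrow> 'm2"
    and s3 :: "complex \<Rightarrow> 'm3::ab_group_add \<Rightarrow> 'm3" and T3 :: "'m3 \<Rightarrow> 'm3"
    and act3 :: "int \<Rightarrow> 'v \<Rightarrow> 'm3 \<Rightarrow> 'm3"
    and Yi :: "complex \<Rightarrow> 'm1 \<Rightarrow> 'm2 \<Rightarrow> 'm3" and S :: "complex set"
  assumes VA: "vertex_algebra sV vac TV Y"
    and M1: "va_module sV vac Y s1 T1 act1"
    and M2: "va_module sV vac Y s2 T2 act2"
    and M3: "va_module sV vac Y s3 T3 act3"
    and I: "intertwining S s1 s2 s3 T1 T2 T3 act1 act2 act3 Yi"
begin

lemma vector_space_3: "vector_space s3"
  using M3 by (simp add: va_module_def)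

lemma borcherds_Yi: "borcherds s3 act1 act2 act3 Yi"
  using I by (simp add: intertwining_def)

sublocale W1: vector_space s1 using M1 by (simp add: va_module_def)
sublocale W2: vector_space s2 using M2 by (simp add: va_module_def)
sublocale W3: vector_space s3 by (rule vector_space_3)

lemma Yi_hom_right: "module_hom s2 s3 (Yi n x)"
  using I by (simp add: intertwining_def bilin_def module_hom_iff_linear)
lemma Yi_hom_left: "module_hom s1 s3 (\<lambda>x. Yi n x y)"
  using I by (simp add: intertwining_def bilin_def module_hom_iff_linear)
lemma act3_hom_right: "module_hom s3 s3 (act3 n v)"
  using M3 by (simp add: va_module_def bilin_def module_hom_iff_linear)
lemma act3_hom_left: "module_hom sV s3 (\<lambda>v. act3 n v c)"
  using M3 by (simp add: va_module_def bilin_def module_hom_iff_linear)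

lemmas Yi_linear_right = module_hom.add[OF Yi_hom_right] module_hom.scale[OF Yi_hom_right]
  module_hom.zero[OF Yi_hom_right] module_hom.neg[OF Yi_hom_right] module_hom.diff[OF Yi_hom_right]
lemmas Yi_linear_left = module_hom.add[OF Yi_hom_left] module_hom.scale[OF Yi_hom_left]
  module_hom.zero[OF Yi_hom_left] module_hom.neg[OF Yi_hom_left] module_hom.diff[OF Yi_hom_left]
  module_hom.sum[OF Yi_hom_left]
lemmas act3_linear_right = module_hom.add[OF act3_hom_right] module_hom.scale[OF act3_hom_right]
  module_hom.zero[OF act3_hom_right] module_hom.neg[OF act3_hom_right] module_hom.diff[OF act3_hom_right]

lemma Yi_T1_pow: "Yi n ((T1^^i) a) b = s3 (pochhammer (- n) i) (Yi (n - of_nat i) a b)"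
proof (induction i arbitrary: a)
  case (Suc i)
  have "Yi n ((T1^^Suc i) a) b = s3 (pochhammer (- n) i) (Yi (n - of_nat i) (T1 a) b)"
    using Suc.IH by (simp add: funpow_swap1)
  also have "\<dots> = s3 (pochhammer (- n) (Suc i)) (Yi (n - of_nat (Suc i)) a b)"
    using I by (simp add: intertwining_def pochhammer_Suc algebra_simps)
  finally show ?case .
qed simp

lemma Yi_minus_one_T1_pow: "Yi (-1) ((T1^^i) a) b = s3 (fact i) (Yi (-1 - of_nat i) a b)"
  by (simp add: Yi_T1_pow pochhammer_fact)

lemma act3_TV_pow: "act3 k ((TV^^i) v) c = s3 (pochhammer (- of_int k) i) (act3 (k - int i) v c)"
proof (induction i arbitrary: v)
  case (Suc i)
  have "act3 k ((TV^^Suc i) v) c = s3 (pochhammer (- of_int k) i) (act3 (k - int i) (TV v) c)"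
    using Suc.IH by (simp add: funpow_swap1)
  also have "\<dots> = s3 (pochhammer (- of_int k) (Suc i)) (act3 (k - int (Suc i)) v c)"
    by (simp add: va_module_act_translation[OF VA M3] pochhammer_Suc algebra_simps)
  finally show ?case .
qed simp

lemma act1_truncated: "\<exists>N::nat. \<forall>n\<ge>int N. act1 n v c = 0"
proof -
  obtain N where "\<forall>n\<ge>N. act1 n v c = 0"
    using M1 unfolding va_module_def truncated_def by blast
  then show ?thesis by (intro exI[of _ "nat N"]) auto
qed

lemma act2_truncated: "\<exists>N::nat. \<forall>n\<ge>int N. act2 n v c = 0"
proof -
  obtain N where "\<forall>n\<ge>N. act2 n v c = 0"
    using M2 unfolding va_module_def truncated_def by blast
  then show ?thesis by (intro exI[of _ "nat N"]) auto
qed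

lemma Yi_truncated: "\<exists>K::nat. \<forall>j\<ge>K. Yi (e + of_nat j) a b = 0"
proof -
  obtain D where D: "finite D" "\<And>n. Yi n a b \<noteq> 0 \<Longrightarrow> \<exists>d\<in>D. \<exists>k::nat. n = d - 1 - of_nat k"
    using I unfolding intertwining_def by blast
  define R where "R = Max (insert 0 (Re ` D))"
  have "Re n < R" if nz: "Yi n a b \<noteq> 0" for n
  proof -
    obtain d k where "d \<in> D" "n = d - 1 - of_nat (k::nat)" using D(2)[OF nz] by blast
    moreover have "Re d \<le> R" unfolding R_def using D(1) \<open>d \<in> D\<close> by (intro Max_ge) auto
    ultimately show ?thesis by simp
  qed
  moreover have "\<not> Re (e + of_nat j) < R" if "j \<ge> nat \<lceil>R - Re e\<rceil>" for j
  proof -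
    from that have "real j \<ge> R - Re e" by linarith
    then show ?thesis by simp
  qed
  ultimately show ?thesis by blast
qed

lemma commutator_of_nat_mode:
  "act3 (int M) v (Yi k a b) - Yi k a (act2 (int M) v b)
     = (\<Sum>j\<le>M. s3 (of_nat (M choose j)) (Yi (of_nat M + k - of_nat j) (act1 (int j) v a) b))"
proof -
  have "(\<lambda>j. s3 (of_int (int M) gchoose j) (Yi (of_int (int M) + k - of_nat j) (act1 (int j) v a) b))
     = (\<lambda>j. if j \<in> {..M} then s3 (of_nat (M choose j)) (Yi (of_nat M + k - of_nat j) (act1 (int j) v a) b) else 0)"
    by (auto simp: fun_eq_iff binomial_gbinomial[symmetric] binomial_eq_0 simp del: atMost_iff)
  then show ?thesis
    unfolding borcherds_commutator[OF borcherds_Yi vector_space_3]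
    by (simp only: Sum_any.conditionalize[OF finite_atMost])
qed

lemma commutator_minus_one_mode:
  assumes "\<forall>n\<ge>int N. act1 n v a = 0"
  shows "act3 (-1) v (Yi k a b) - Yi k a (act2 (-1) v b)
     = (\<Sum>j<N. s3 ((-1)^j) (Yi (k - 1 - of_nat j) (act1 (int j) v a) b))"
proof -
  have "(\<lambda>j. s3 (of_int (-1) gchoose j) (Yi (of_int (-1) + k - of_nat j) (act1 (int j) v a) b))
     = (\<lambda>j. if j \<in> {..<N} then s3 ((-1)^j) (Yi (k - 1 - of_nat j) (act1 (int j) v a) b) else 0)"
  proof (rule ext)
    fix j
    show "s3 (of_int (-1) gchoose j) (Yi (of_int (-1) + k - of_nat j) (act1 (int j) v a) b)
        = (if j \<in> {..<N} then s3 ((-1)^j) (Yi (k - 1 - of_nat j) (act1 (int j) v a) b) else 0)"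
    proof (cases "j < N")
      case False
      then have "act1 (int j) v a = 0" using assms by simp
      then show ?thesis by (simp add: Yi_linear_left)
    qed (simp add: gbinomial_minus_one algebra_simps)
  qed
  then show ?thesis
    unfolding borcherds_commutator[OF borcherds_Yi vector_space_3]
    by (simp only: Sum_any.conditionalize[OF finite_lessThan])
qed

lemma fint_ibr0_lbr_not_Nats:
  assumes "e \<notin> \<nat>"
  shows "fint s3 (\<lambda>p' q. ibr0 s3 Yi (lbr s1 act1 v a p') b q) e = 0"
proof -
  have "fint s3 (\<lambda>p' q. ibr0 s3 Yi (lbr s1 act1 v a p') b q) e
      = (\<Sum>r\<in>{}. if e - 1 - of_nat r \<in> negative_Ints then 0
                 else s3 (1 / (e - of_nat r)) (ibr0 s3 Yi (lbr s1 act1 v a (of_nat r)) b (e - 1 - of_nat r)))"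
  proof (rule fint_eq_sum[OF vector_space_3 finite.emptyI])
    fix c assume "c \<notin> negative_Ints" "ibr0 s3 Yi (lbr s1 act1 v a (e - c - 1)) b c \<noteq> 0"
    then have "c \<in> \<nat>" "e - c - 1 \<in> \<nat>"
      by (auto simp: ibr0_def lbr_def Yi_linear_left split: if_splits)
    then have "c + (e - c - 1) + 1 \<in> \<nat>" by (intro Nats_add Nats_1)
    with assms show "\<exists>r\<in>{}. c = e - 1 - of_nat r" by simp
  qed
  then show ?thesis by simp
qed

lemma fint_ibr0_lbr_summand:
  assumes "r < M"
  shows "(if of_nat M - 1 - of_nat r \<in> negative_Ints then 0
          else s3 (1 / (of_nat M - of_nat r)) (ibr0 s3 Yi (lbr s1 act1 v a (of_nat r)) b (of_nat M - 1 - of_nat r)))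
     = s3 (1 / (fact (M - r) * fact r)) (Yi (of_nat M - 1 - of_nat r) (act1 (int r) v a) b)"
proof -
  have idx: "of_nat M - 1 - of_nat r = (of_nat (M - 1 - r) :: complex)"
    using assms by (simp add: of_nat_diff)
  have "M - r = Suc (M - 1 - r)" using assms by simp
  then have fact_eq: "(fact (M - r) :: complex) = (of_nat M - of_nat r) * fact (M - 1 - r)"
    using assms by (simp add: of_nat_diff)
  have "(of_nat M - of_nat r :: complex) \<noteq> 0" using assms by simp
  then have scalar: "1 / (of_nat M - of_nat r) * (inverse (fact (M - 1 - r)) * inverse (fact r))
      = (1 / (fact (M - r) * fact r) :: complex)"
    by (simp add: fact_eq field_simps)
  have ibr0_eq: "ibr0 s3 Yi (lbr s1 act1 v a (of_nat r)) b (of_nat (M - 1 - r))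
      = s3 (inverse (fact (M - 1 - r)) * inverse (fact r)) (Yi (of_nat (M - 1 - r)) (act1 (int r) v a) b)"
    by (simp add: ibr0_def lbr_def Yi_linear_left rGamma_of_nat_plus_one)
  show ?thesis
    unfolding idx if_not_P[OF of_nat_notin_negative_Ints] ibr0_eq W3.scale_scale scalar ..
qed

lemma fint_ibr0_lbr_of_nat:
  "fint s3 (\<lambda>p' q. ibr0 s3 Yi (lbr s1 act1 v a p') b q) (of_nat M)
     = (\<Sum>j<M. s3 (1 / (fact (M - j) * fact j)) (Yi (of_nat M - 1 - of_nat j) (act1 (int j) v a) b))"
proof -
  have "fint s3 (\<lambda>p' q. ibr0 s3 Yi (lbr s1 act1 v a p') b q) (of_nat M)
      = (\<Sum>r<M. if of_nat M - 1 - of_nat r \<in> negative_Ints then 0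
                else s3 (1 / (of_nat M - of_nat r))
                       (ibr0 s3 Yi (lbr s1 act1 v a (of_nat r)) b (of_nat M - 1 - of_nat r)))"
  proof (rule fint_eq_sum[OF vector_space_3 finite_lessThan])
    fix c assume "c \<notin> negative_Ints" "ibr0 s3 Yi (lbr s1 act1 v a (of_nat M - c - 1)) b c \<noteq> 0"
    then have "c \<in> \<nat>" "of_nat M - c - 1 \<in> \<nat>"
      by (auto simp: ibr0_def lbr_def Yi_linear_left split: if_splits)
    then obtain i r where ir: "c = of_nat i" "of_nat M - c - 1 = (of_nat r :: complex)"
      by (auto elim!: Nats_cases)
    then have "of_nat M = (of_nat (i + r + 1) :: complex)" by (simp add: algebra_simps)
    then have "M = i + r + 1" using of_nat_eq_iff by blast
    with ir show "\<exists>r\<in>{..<M}. c = of_nat M - 1 - of_nat r"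
      by (intro bexI[of _ r]) (auto simp: algebra_simps)
  qed
  also have "\<dots> = (\<Sum>j<M. s3 (1 / (fact (M - j) * fact j)) (Yi (of_nat M - 1 - of_nat j) (act1 (int j) v a) b))"
    by (intro sum.cong refl fint_ibr0_lbr_summand) simp
  finally show ?thesis .
qed

lemma lbr_product:
  "lbr s3 act3 v (Yi (-1) a b)
     = (\<lambda>p. Yi (-1) a (lbr s2 act2 v b p) + Yi (-1) (lbr s1 act1 v a p) b
            + fint s3 (\<lambda>p' q. ibr0 s3 Yi (lbr s1 act1 v a p') b q) p)"
proof (rule ext)
  fix e
  show "lbr s3 act3 v (Yi (-1) a b) e
      = Yi (-1) a (lbr s2 act2 v b e) + Yi (-1) (lbr s1 act1 v a e) b
        + fint s3 (\<lambda>p' q. ibr0 s3 Yi (lbr s1 act1 v a p') b q) e"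
  proof (cases "e \<in> \<nat>")
    case False
    then show ?thesis
      unfolding fint_ibr0_lbr_not_Nats[OF False] by (simp add: lbr_def Yi_linear_left Yi_linear_right)
  next
    case True
    then obtain M where e: "e = of_nat M" by (auto elim: Nats_cases)
    define Z where "Z j = Yi (of_nat M - 1 - of_nat j) (act1 (int j) v a) b" for j
    have "s3 (1 / fact M) (act3 (int M) v (Yi (-1) a b) - Yi (-1) a (act2 (int M) v b))
        = (\<Sum>j\<le>M. s3 (1 / (fact (M - j) * fact j)) (Z j))"
      unfolding commutator_of_nat_mode Z_def W3.scale_sum_right
      by (rule sum.cong) (auto simp: binomial_fact field_simps)
    also have "\<dots> = s3 (1 / fact M) (Z M) + (\<Sum>j<M. s3 (1 / (fact (M - j) * fact j)) (Z j))"
      by (simp add: lessThan_Suc_atMost[symmetric])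
    finally show ?thesis
      unfolding e fint_ibr0_lbr_of_nat
      by (simp add: lbr_def rGamma_of_nat_plus_one Z_def Yi_linear_left Yi_linear_right)
         (simp add: W3.scale_right_diff_distrib divide_inverse algebra_simps)
  qed
qed

lemma ibr_rev_of_nat:
  assumes "\<forall>n\<ge>int N. act1 n v a = 0"
  shows "ibr_rev s1 T1 act1 a v (of_nat r)
     = - (\<Sum>j<N. if r \<le> j then s1 ((-1)^j * of_nat (j choose r) / fact j) ((T1^^(j - r)) (act1 (int j) v a))
                 else 0)"
proof -
  have "module_hom s1 s1 T1"
    using M1 by (simp add: va_module_def module_hom_iff_linear)
  then have "T1 0 = 0" by (rule module_hom.zero)
  then have T1_pow_zero: "(T1^^k) 0 = 0" for k
    by (induction k) simp_all
  have "(\<Sum>j. if r \<le> j then s1 ((-1)^j * of_nat (j choose r) / fact j) ((T1^^(j - r)) (act1 (int j) v a)) else 0)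
      = (\<Sum>j<N. if r \<le> j then s1 ((-1)^j * of_nat (j choose r) / fact j) ((T1^^(j - r)) (act1 (int j) v a))
                 else 0)"
  proof (rule Sum_any.expand_superset)
    show "{j. (if r \<le> j then s1 ((-1)^j * of_nat (j choose r) / fact j) ((T1^^(j - r)) (act1 (int j) v a))
               else 0) \<noteq> 0} \<subseteq> {..<N}"
    proof (rule subsetI, rule ccontr)
      fix j assume nz: "j \<in> {j. (if r \<le> j then s1 ((-1)^j * of_nat (j choose r) / fact j)
                                  ((T1^^(j - r)) (act1 (int j) v a)) else 0) \<noteq> 0}"
        and "j \<notin> {..<N}"
      then have "act1 (int j) v a = 0" using assms by simp
      then have "(T1^^(j - r)) (act1 (int j) v a) = 0" by (simp add: T1_pow_zero)
      then show False using nz by (cases "r \<le> j") auto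
    qed
  qed simp
  then show ?thesis by (simp add: ibr_rev_def cong: if_cong)
qed

lemma Yi_ibr_rev_of_nat:
  assumes "\<forall>n\<ge>int N. act1 n v a = 0"
  shows "Yi c (ibr_rev s1 T1 act1 a v (of_nat r)) b
     = - (\<Sum>j<N. if r \<le> j then s3 ((-1)^j * of_nat (j choose r) / fact j * pochhammer (- c) (j - r))
                                       (Yi (c - of_nat (j - r)) (act1 (int j) v a) b)
                 else 0)"
  unfolding ibr_rev_of_nat[OF assms] Yi_linear_left
  by (intro arg_cong[where f = uminus] sum.cong refl) (simp add: Yi_linear_left Yi_T1_pow del: of_nat_diff)

lemma Yi_minus_one_ibr_rev:
  assumes "\<forall>n\<ge>int N. act1 n v a = 0"
  shows "Yi (-1) (ibr_rev s1 T1 act1 a v e) b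
     = - (\<Sum>j<N. if e - 1 - of_nat j \<in> negative_Ints
                 then s3 ((-1)^j * rGamma (e + 1)) (Yi (e - 1 - of_nat j) (act1 (int j) v a) b) else 0)"
proof (cases "e \<in> \<nat>")
  case False
  then have "ibr_rev s1 T1 act1 a v e = 0" by (simp add: ibr_rev_def)
  moreover have "(\<Sum>j<N. if e - 1 - of_nat j \<in> negative_Ints
                 then s3 ((-1)^j * rGamma (e + 1)) (Yi (e - 1 - of_nat j) (act1 (int j) v a) b) else 0) = 0"
  proof (intro sum.neutral ballI)
    fix j
    show "(if e - 1 - of_nat j \<in> negative_Ints
           then s3 ((-1)^j * rGamma (e + 1)) (Yi (e - 1 - of_nat j) (act1 (int j) v a) b) else 0) = 0"
      using rGamma_plus_one_eq_0_if_not_Nats[OF False, of j] by auto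
  qed
  ultimately show ?thesis
    by (simp add: Yi_linear_left)
next
  case True
  then obtain r where e: "e = of_nat r" by (auto elim: Nats_cases)
  have "(if r \<le> j then s3 ((-1)^j * of_nat (j choose r) / fact j * pochhammer (- (-1)) (j - r))
                            (Yi (-1 - of_nat (j - r)) (act1 (int j) v a) b) else 0)
      = (if e - 1 - of_nat j \<in> negative_Ints
         then s3 ((-1)^j * rGamma (e + 1)) (Yi (e - 1 - of_nat j) (act1 (int j) v a) b) else 0)" for j
  proof (cases "r \<le> j")
    case True
    have "rGamma (e + 1) = inverse (fact r)"
      by (simp add: e rGamma_of_nat_plus_one)
    with True have idx: "-1 - (of_nat j - of_nat r) = of_nat r - 1 - (of_nat j :: complex)"
      and scalar: "(-1)^j * of_nat (j choose r) / fact j * pochhammer 1 (j - r) = (-1)^j * rGamma (e + 1)"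
      by (simp_all add: e of_nat_diff binomial_fact pochhammer_fact[symmetric] field_simps)
    with True show ?thesis
      unfolding e of_nat_diff_in_negative_Ints_iff by (simp add: idx scalar)
  qed (unfold e of_nat_diff_in_negative_Ints_iff, simp)
  then show ?thesis
    unfolding e Yi_ibr_rev_of_nat[OF assms] by simp
qed

lemma fint_ibr_ibr_rev_summand:
  assumes N: "\<forall>n\<ge>int N. act1 n v a = 0"
  shows "(if e - 1 - of_nat r \<in> negative_Ints then 0
          else s3 (1 / (e - of_nat r)) (ibr s3 Yi (ibr_rev s1 T1 act1 a v (of_nat r)) b (e - 1 - of_nat r)))
     = - (\<Sum>j<N. if r \<le> j
                 then s3 (1 / (e - of_nat r) * rGamma (e - of_nat r) * ((-1)^j * of_nat (j choose r) / fact j)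
                          * pochhammer (1 + of_nat r - e) (j - r)) (Yi (e - 1 - of_nat j) (act1 (int j) v a) b)
                 else 0)"
proof -
  define c where "c = e - 1 - of_nat r"
  have c: "c + 1 = e - of_nat r" "- c = 1 + of_nat r - e" by (simp_all add: c_def)
  have ibr_eq: "ibr s3 Yi (ibr_rev s1 T1 act1 a v (of_nat r)) b c
      = - (\<Sum>j<N. if r \<le> j then s3 (rGamma (e - of_nat r) * ((-1)^j * of_nat (j choose r) / fact j)
                                    * pochhammer (1 + of_nat r - e) (j - r)) (Yi (e - 1 - of_nat j) (act1 (int j) v a) b)
                  else 0)"
    unfolding ibr_def Yi_ibr_rev_of_nat[OF N] c W3.scale_minus_right W3.scale_sum_right
  proof (intro arg_cong[where f = uminus] sum.cong refl)
    fix j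
    have idx: "c - (of_nat j - of_nat r) = e - 1 - of_nat j"
      by (simp add: c_def)
    show "s3 (rGamma (e - of_nat r)) (if r \<le> j
          then s3 ((-1)^j * of_nat (j choose r) / fact j * pochhammer (1 + of_nat r - e) (j - r))
                 (Yi (c - of_nat (j - r)) (act1 (int j) v a) b) else 0)
        = (if r \<le> j then s3 (rGamma (e - of_nat r) * ((-1)^j * of_nat (j choose r) / fact j)
                              * pochhammer (1 + of_nat r - e) (j - r)) (Yi (e - 1 - of_nat j) (act1 (int j) v a) b)
           else 0)"
      by (simp add: idx mult.assoc)
  qed
  show ?thesis
  proof (cases "c \<in> negative_Ints")
    case True
    then have rG0: "rGamma (e - of_nat r) = 0"
      using rGamma_negative_Ints_plus_one[of c] c(1) by simp
    from True show ?thesis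
      unfolding c_def[symmetric] rG0 by (auto intro!: sum.neutral)
  next
    case False
    then show ?thesis
      unfolding c_def[symmetric] if_not_P[OF False] ibr_eq W3.scale_minus_right W3.scale_sum_right
      by (simp add: mult.assoc if_distrib cong: if_cong)
  qed
qed

lemma fint_ibr_ibr_rev:
  assumes N: "\<forall>n\<ge>int N. act1 n v a = 0"
  shows "fint s3 (\<lambda>p' q. ibr s3 Yi (ibr_rev s1 T1 act1 a v p') b q) e
     = - (\<Sum>j<N. if e - 1 - of_nat j \<in> negative_Ints then 0
                 else s3 ((-1)^j * rGamma (e + 1)) (Yi (e - 1 - of_nat j) (act1 (int j) v a) b))"
proof -
  define Z where "Z j = Yi (e - 1 - of_nat j) (act1 (int j) v a) b" for j
  define w where "w j r = 1 / (e - of_nat r) * rGamma (e - of_nat r) * ((-1)^j * of_nat (j choose r) / fact j)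
                          * pochhammer (1 + of_nat r - e) (j - r)" for j r :: nat
  have "fint s3 (\<lambda>p' q. ibr s3 Yi (ibr_rev s1 T1 act1 a v p') b q) e
      = (\<Sum>r<N. if e - 1 - of_nat r \<in> negative_Ints then 0
                else s3 (1 / (e - of_nat r)) (ibr s3 Yi (ibr_rev s1 T1 act1 a v (of_nat r)) b (e - 1 - of_nat r)))"
  proof (rule fint_eq_sum[OF vector_space_3 finite_lessThan])
    fix c assume "c \<notin> negative_Ints" "ibr s3 Yi (ibr_rev s1 T1 act1 a v (e - c - 1)) b c \<noteq> 0"
    then have nz: "ibr_rev s1 T1 act1 a v (e - c - 1) \<noteq> 0"
      by (auto simp: ibr_def Yi_linear_left)
    then have "e - c - 1 \<in> \<nat>" by (auto simp: ibr_rev_def split: if_splits)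
    then obtain r where r: "e - c - 1 = of_nat r" by (auto elim: Nats_cases)
    have "r < N"
    proof (rule ccontr)
      assume "\<not> r < N"
      then have "ibr_rev s1 T1 act1 a v (of_nat r) = 0"
        unfolding ibr_rev_of_nat[OF N] by (auto intro!: sum.neutral)
      with nz r show False by simp
    qed
    with r show "\<exists>r\<in>{..<N}. c = e - 1 - of_nat r" by (intro bexI[of _ r]) (auto simp: algebra_simps)
  qed
  also have "\<dots> = - (\<Sum>r<N. \<Sum>j<N. if r \<le> j then s3 (w j r) (Z j) else 0)"
    unfolding fint_ibr_ibr_rev_summand[OF N] w_def Z_def by (simp add: sum_negf)
  also have "\<dots> = - (\<Sum>j<N. s3 (\<Sum>r\<le>j. w j r) (Z j))"
    by (simp add: sum_lessThan_triangle_swap W3.scale_sum_left)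
  also have "\<dots> = - (\<Sum>j<N. if e - 1 - of_nat j \<in> negative_Ints then 0
                      else s3 ((-1)^j * rGamma (e + 1)) (Z j))"
    unfolding w_def binomial_beta_sum_rGamma by (intro arg_cong[where f = uminus] sum.cong refl) auto
  finally show ?thesis unfolding Z_def .
qed

lemma ibr_product_right:
  "ibr s3 Yi a (act2 (-1) v b)
     = (\<lambda>p. act3 (-1) v (ibr s3 Yi a b p) + Yi (-1) (ibr_rev s1 T1 act1 a v p) b
            + fint s3 (\<lambda>p' q. ibr s3 Yi (ibr_rev s1 T1 act1 a v p') b q) p)"
proof (rule ext)
  fix e
  obtain N where N: "\<forall>n\<ge>int N. act1 n v a = 0" using act1_truncated by blast
  define Z where "Z j = Yi (e - 1 - of_nat j) (act1 (int j) v a) b" for j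
  have split: "(\<Sum>j<N. if e - 1 - of_nat j \<in> negative_Ints then s3 ((-1)^j * rGamma (e + 1)) (Z j) else 0)
      + (\<Sum>j<N. if e - 1 - of_nat j \<in> negative_Ints then 0 else s3 ((-1)^j * rGamma (e + 1)) (Z j))
      = s3 (rGamma (e + 1)) (\<Sum>j<N. s3 ((-1)^j) (Z j))"
    unfolding sum_if_add_sum_if_not by (simp add: W3.scale_sum_right mult.commute)
  have "ibr s3 Yi a (act2 (-1) v b) e
      = s3 (rGamma (e + 1)) (act3 (-1) v (Yi e a b) - (\<Sum>j<N. s3 ((-1)^j) (Z j)))"
    unfolding Z_def commutator_minus_one_mode[OF N, symmetric] by (simp add: ibr_def)
  then show "ibr s3 Yi a (act2 (-1) v b) e
      = act3 (-1) v (ibr s3 Yi a b e) + Yi (-1) (ibr_rev s1 T1 act1 a v e) b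
        + fint s3 (\<lambda>p' q. ibr s3 Yi (ibr_rev s1 T1 act1 a v p') b q) e"
    unfolding Yi_minus_one_ibr_rev[OF N] fint_ibr_ibr_rev[OF N] Z_def[symmetric]
    using split by (simp add: ibr_def act3_linear_right W3.scale_right_diff_distrib algebra_simps)
qed

lemma Yi_act1_minus_one:
  assumes N: "\<forall>n\<ge>int N. act2 n v b = 0"
  shows "Yi e (act1 (-1) v a) b
     = (\<Sum>j::nat. act3 (-1 - int j) v (Yi (e + of_nat j) a b))
       + (\<Sum>j<N. Yi (e - 1 - of_nat j) a (act2 (int j) v b))"
proof -
  obtain K where K: "\<forall>j\<ge>K. Yi (e + of_nat j) a b = 0" using Yi_truncated by blast
  define U where "U j = act3 (-1 - int j) v (Yi (e + of_nat j) a b)" for j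
  define W where "W j = Yi (e - 1 - of_nat j) a (act2 (int j) v b)" for j
  have U_supp: "{j. U j \<noteq> 0} \<subseteq> {..<K}"
    using K by (auto simp: U_def act3_linear_right simp flip: not_le)
  have W_supp: "{j. W j \<noteq> 0} \<subseteq> {..<N}"
    using N by (auto simp: W_def Yi_linear_right simp flip: not_le)
  have "Yi e (act1 (-1) v a) b = (\<Sum>j. U j + W j)"
    unfolding U_def W_def by (rule borcherds_minus_one_product[OF borcherds_Yi vector_space_3])
  also have "\<dots> = Sum_any U + Sum_any W"
    using U_supp W_supp by (intro Sum_any.distrib) (auto intro: finite_subset)
  also have "Sum_any W = (\<Sum>j<N. W j)"
    by (rule Sum_any.expand_superset[OF finite_lessThan W_supp])
  finally show ?thesis unfolding U_def W_def .
qed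

lemma eTd_act3_ibr:
  "eTd sV s3 (act3 (-1)) TV v (ibr s3 Yi a b) e
     = s3 (rGamma (e + 1)) (\<Sum>j::nat. act3 (-1 - int j) v (Yi (e + of_nat j) a b))"
proof -
  have "act3 (-1) (sV (1 / fact j) ((TV ^^ j) v)) (ser_deriv s3 j (ibr s3 Yi a b) e)
      = s3 (rGamma (e + 1)) (act3 (-1 - int j) v (Yi (e + of_nat j) a b))" for j
  proof -
    have "pochhammer (e + 1) j * rGamma (e + of_nat j + 1) = rGamma (e + 1)"
      using pochhammer_rGamma[of "e + 1" j] by (simp add: add_ac)
    then show ?thesis
      by (simp add: ser_deriv_def ibr_def module_hom.scale[OF act3_hom_left] act3_TV_pow
                    act3_linear_right pochhammer_fact[symmetric])
  qed
  then show ?thesis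
    unfolding eTd_def W3.scale_Sum_any by simp
qed

lemma eTd_Yi_lbr_term:
  "Yi (-1) (s1 (1 / fact i) ((T1^^i) a)) (ser_deriv s2 i (lbr s2 act2 v b) e)
     = (if e \<in> \<nat> then s3 (rGamma (e + 1)) (Yi (-1 - of_nat i) a (act2 (\<lfloor>Re e\<rfloor> + int i) v b)) else 0)"
proof -
  have poch: "pochhammer (e + 1) i * rGamma (e + of_nat i + 1) = rGamma (e + 1)"
    using pochhammer_rGamma[of "e + 1" i] by (simp add: add_ac)
  show ?thesis
  proof (cases "e + of_nat i \<in> \<nat>")
    case True
    then obtain m where m: "e + of_nat i = of_nat m" by (auto elim: Nats_cases)
    have summand: "Yi (-1) (s1 (1 / fact i) ((T1^^i) a)) (ser_deriv s2 i (lbr s2 act2 v b) e)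
        = s3 (rGamma (e + 1)) (Yi (-1 - of_nat i) a (act2 (int m) v b))"
      using True m poch
      by (simp add: ser_deriv_def lbr_def Yi_linear_left Yi_linear_right Yi_minus_one_T1_pow mult_ac)
    show ?thesis
    proof (cases "e \<in> \<nat>")
      case True
      then obtain r where "e = of_nat r" by (auto elim: Nats_cases)
      with m have "int m = \<lfloor>Re e\<rfloor> + int i"
        by (metis floor_Re_of_nat of_nat_add of_nat_eq_iff)
      with True show ?thesis by (simp add: summand)
    next
      case False
      moreover have "e - 1 - of_nat m = of_int (- int i - 1)"
        using m by (simp add: algebra_simps)
      then have "e - 1 - of_nat m \<in> negative_Ints"
        using of_int_in_negative_Ints_iff[of "- int i - 1"] by (simp only:)
      ultimately show ?thesis
        using rGamma_plus_one_eq_0_if_not_Nats summand by simp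
    qed
  next
    case False
    then have "e \<notin> \<nat>" by auto
    with False show ?thesis by (simp add: ser_deriv_def lbr_def Yi_linear_right)
  qed
qed

lemma eTd_Yi_lbr_of_nat:
  assumes N: "\<forall>n\<ge>int N. act2 n v b = 0"
  shows "eTd s1 s2 (Yi (-1)) T1 a (lbr s2 act2 v b) (of_nat r)
     = (\<Sum>j<N. if r \<le> j
                then s3 (rGamma (of_nat r + 1)) (Yi (of_nat r - 1 - of_nat j) a (act2 (int j) v b)) else 0)"
proof -
  define h where "h j = s3 (rGamma (of_nat r + 1)) (Yi (of_nat r - 1 - of_nat j) a (act2 (int j) v b))" for j
  have h0: "h j = 0" if "N \<le> j" for j
    using that N by (simp add: h_def Yi_linear_right)
  have "eTd s1 s2 (Yi (-1)) T1 a (lbr s2 act2 v b) (of_nat r) = (\<Sum>i. h (i + r))"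
  proof -
    have "of_nat r - 1 - of_nat (i + r) = (-1 - of_nat i :: complex)" for i
      by simp
    then show ?thesis
      unfolding eTd_def eTd_Yi_lbr_term by (simp add: h_def add.commute)
  qed
  also have "\<dots> = (\<Sum>i<N. h (i + r))"
    using h0 by (intro Sum_any.expand_superset) (auto simp flip: not_le)
  also have "\<dots> = (\<Sum>j\<in>{r..<N + r}. h j)"
    using sum.shift_bounds_nat_ivl[of h 0 r N] by (simp add: atLeast0LessThan)
  also have "\<dots> = (\<Sum>j<N + r. if r \<le> j then h j else 0)"
  proof -
    have "(\<Sum>j<N + r. if r \<le> j then h j else 0) = (\<Sum>j\<in>{..<N + r} \<inter> {j. r \<le> j}. h j)"
      by (simp add: sum.inter_restrict)
    also have "{..<N + r} \<inter> {j. r \<le> j} = {r..<N + r}" by auto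
    finally show ?thesis by (rule sym)
  qed
  also have "\<dots> = (\<Sum>j<N. if r \<le> j then h j else 0)"
    using h0 by (intro sum.mono_neutral_right) auto
  finally show ?thesis unfolding h_def .
qed

lemma eTd_Yi_lbr:
  assumes N: "\<forall>n\<ge>int N. act2 n v b = 0"
  shows "eTd s1 s2 (Yi (-1)) T1 a (lbr s2 act2 v b) e
     = (\<Sum>j<N. if e - 1 - of_nat j \<in> negative_Ints
                then s3 (rGamma (e + 1)) (Yi (e - 1 - of_nat j) a (act2 (int j) v b)) else 0)"
proof (cases "e \<in> \<nat>")
  case False
  have "(\<Sum>j<N. if e - 1 - of_nat j \<in> negative_Ints
                then s3 (rGamma (e + 1)) (Yi (e - 1 - of_nat j) a (act2 (int j) v b)) else 0) = 0"
  proof (intro sum.neutral ballI)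
    fix j
    show "(if e - 1 - of_nat j \<in> negative_Ints
           then s3 (rGamma (e + 1)) (Yi (e - 1 - of_nat j) a (act2 (int j) v b)) else 0) = 0"
      using rGamma_plus_one_eq_0_if_not_Nats[OF False, of j] by auto
  qed
  with False show ?thesis
    unfolding eTd_def eTd_Yi_lbr_term by simp
next
  case True
  then obtain r where e: "e = of_nat r" by (auto elim: Nats_cases)
  show ?thesis
    unfolding e eTd_Yi_lbr_of_nat[OF N] of_nat_diff_in_negative_Ints_iff ..
qed

lemma lbr_diff_nonzero:
  assumes "\<forall>n\<ge>int N. act2 n v b = 0" and "lbr_diff s2 act2 v b p q \<noteq> 0"
  obtains p' q' where "p = of_nat p'" "q = of_nat q'" "p' + q' < N"
proof -
  have "p \<in> \<nat>" "q \<in> \<nat>"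
    using assms(2) by (auto simp: lbr_diff_def split: if_splits)
  then obtain p' q' where pq: "p = of_nat p'" "q = of_nat q'" by (auto elim!: Nats_cases)
  moreover have "p' + q' < N"
  proof (rule ccontr)
    assume "\<not> p' + q' < N"
    then have "act2 (int (p' + q')) v b = 0" using assms(1) by simp
    with assms(2) pq show False by (simp add: lbr_diff_of_nat)
  qed
  ultimately show ?thesis by (rule that)
qed

lemma ibr_mu_lbr_diff_of_nat:
  assumes N: "\<forall>n\<ge>int N. act2 n v b = 0"
  shows "ibr_mu s3 Yi a (lbr_diff s2 act2 v b) (of_nat p) c
     = (\<Sum>q<N. s3 (rGamma (c - of_nat q + 1) * ((-1)^q * rGamma (of_nat p + 1) * rGamma (of_nat q + 1)))
                  (Yi (c - of_nat q) a (act2 (int (p + q)) v b)))"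
proof -
  have "{q. s3 (rGamma (c - q + 1)) (Yi (c - q) a (lbr_diff s2 act2 v b (of_nat p) q)) \<noteq> 0}
      \<subseteq> of_nat ` {..<N}"
  proof
    fix q assume "q \<in> {q. s3 (rGamma (c - q + 1)) (Yi (c - q) a (lbr_diff s2 act2 v b (of_nat p) q)) \<noteq> 0}"
    then have "lbr_diff s2 act2 v b (of_nat p) q \<noteq> 0" by (auto simp: Yi_linear_right)
    then obtain p' q' where "q = of_nat q'" "p' + q' < N" by (rule lbr_diff_nonzero[OF N])
    then show "q \<in> of_nat ` {..<N}" by auto
  qed
  then have "ibr_mu s3 Yi a (lbr_diff s2 act2 v b) (of_nat p) c
      = (\<Sum>q\<in>of_nat ` {..<N}. s3 (rGamma (c - q + 1)) (Yi (c - q) a (lbr_diff s2 act2 v b (of_nat p) q)))"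
    unfolding ibr_mu_def by (intro Sum_any.expand_superset) auto
  also have "\<dots> = (\<Sum>q<N. s3 (rGamma (c - of_nat q + 1) * ((-1)^q * rGamma (of_nat p + 1) * rGamma (of_nat q + 1)))
                  (Yi (c - of_nat q) a (act2 (int (p + q)) v b)))"
    by (subst sum.reindex) (auto simp: inj_on_def lbr_diff_of_nat Yi_linear_right)
  finally show ?thesis .
qed

lemma rGamma_minus_of_nat_eq_0:
  assumes "c \<in> negative_Ints"
  shows "rGamma (c + 1 - of_nat q) = 0"
proof -
  have "c + 1 \<in> \<int>\<^sub>\<le>\<^sub>0" using assms negative_Ints_iff_nonpos_Ints by blast
  then have "c + 1 - of_nat q \<in> \<int>\<^sub>\<le>\<^sub>0" by (rule nonpos_Ints_diff_Nats) simp
  then show ?thesis by (rule rGamma_nonpos_Int)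
qed

lemma fint_ibr_mu_lbr_diff_summand:
  assumes N: "\<forall>n\<ge>int N. act2 n v b = 0"
  shows "(if e - 1 - of_nat p \<in> negative_Ints then 0
          else s3 (1 / (e - of_nat p)) (ibr_mu s3 Yi a (lbr_diff s2 act2 v b) (of_nat p) (e - 1 - of_nat p)))
     = (\<Sum>q<N. s3 (1 / (e - of_nat p) * rGamma (e - of_nat (p + q))
                      * ((-1)^q * rGamma (of_nat p + 1) * rGamma (of_nat q + 1)))
                  (Yi (e - 1 - of_nat (p + q)) a (act2 (int (p + q)) v b)))"
proof (cases "e - 1 - of_nat p \<in> negative_Ints")
  case True
  have "rGamma (e - of_nat (p + q)) = 0" for q
    using rGamma_minus_of_nat_eq_0[OF True, of q] by (simp add: algebra_simps)
  with True show ?thesis by simp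
next
  case False
  have idx: "e - 1 - of_nat p - of_nat q = e - 1 - of_nat (p + q)"
    "e - 1 - of_nat (p + q) + 1 = e - of_nat (p + q)" for q
    by simp_all
  show ?thesis
    unfolding if_not_P[OF False] ibr_mu_lbr_diff_of_nat[OF N] idx W3.scale_sum_right
    by (simp add: mult.assoc)
qed

lemma fint_ibr_mu_lbr_diff:
  assumes N: "\<forall>n\<ge>int N. act2 n v b = 0"
  shows "fint s3 (ibr_mu s3 Yi a (lbr_diff s2 act2 v b)) e
     = (\<Sum>j<N. if e - 1 - of_nat j \<in> negative_Ints then 0
                else s3 (rGamma (e + 1)) (Yi (e - 1 - of_nat j) a (act2 (int j) v b)))"
proof -
  define W where "W j = Yi (e - 1 - of_nat j) a (act2 (int j) v b)" for j
  define h where "h p q = s3 (1 / (e - of_nat p) * rGamma (e - of_nat (p + q))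
                             * ((-1)^q * rGamma (of_nat p + 1) * rGamma (of_nat q + 1))) (W (p + q))" for p q :: nat
  have "fint s3 (ibr_mu s3 Yi a (lbr_diff s2 act2 v b)) e
      = (\<Sum>p<N. if e - 1 - of_nat p \<in> negative_Ints then 0
                else s3 (1 / (e - of_nat p)) (ibr_mu s3 Yi a (lbr_diff s2 act2 v b) (of_nat p) (e - 1 - of_nat p)))"
  proof (rule fint_eq_sum[OF vector_space_3 finite_lessThan])
    fix c assume "c \<notin> negative_Ints" "ibr_mu s3 Yi a (lbr_diff s2 act2 v b) (e - c - 1) c \<noteq> 0"
    then obtain q where "s3 (rGamma (c - q + 1)) (Yi (c - q) a (lbr_diff s2 act2 v b (e - c - 1) q)) \<noteq> 0"
      unfolding ibr_mu_def by (blast elim: Sum_any.not_neutral_obtains_not_neutral)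
    then have "lbr_diff s2 act2 v b (e - c - 1) q \<noteq> 0" by (auto simp: Yi_linear_right)
    then obtain p' q' where "e - c - 1 = of_nat p'" "p' + q' < N" by (rule lbr_diff_nonzero[OF N])
    then show "\<exists>r\<in>{..<N}. c = e - 1 - of_nat r" by (intro bexI[of _ p']) (auto simp: algebra_simps)
  qed
  also have "\<dots> = (\<Sum>p<N. \<Sum>q<N. h p q)"
    unfolding fint_ibr_mu_lbr_diff_summand[OF N] h_def W_def ..
  also have "\<dots> = (\<Sum>j<N. \<Sum>q\<le>j. h (j - q) q)"
    using N by (intro sum_lessThan_square_antidiagonal) (simp add: h_def W_def Yi_linear_right)
  also have "\<dots> = (\<Sum>j<N. s3 (\<Sum>q\<le>j. 1 / (e - of_nat (j - q)) * rGamma (e - of_nat j)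
                    * ((-1)^q * rGamma (of_nat (j - q) + 1) * rGamma (of_nat q + 1))) (W j))"
    unfolding W3.scale_sum_left h_def by (intro sum.cong refl) simp
  also have "\<dots> = (\<Sum>j<N. if e - 1 - of_nat j \<in> negative_Ints then 0 else s3 (rGamma (e + 1)) (W j))"
    unfolding beta_sum_rGamma by (intro sum.cong refl) auto
  finally show ?thesis unfolding W_def .
qed

lemma ibr_product_left:
  "ibr s3 Yi (act1 (-1) v a) b
     = (\<lambda>p. eTd sV s3 (act3 (-1)) TV v (ibr s3 Yi a b) p
            + eTd s1 s2 (Yi (-1)) T1 a (lbr s2 act2 v b) p
            + fint s3 (ibr_mu s3 Yi a (lbr_diff s2 act2 v b)) p)"
proof (rule ext)
  fix e
  obtain N where N: "\<forall>n\<ge>int N. act2 n v b = 0" using act2_truncated by blast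
  define W where "W j = Yi (e - 1 - of_nat j) a (act2 (int j) v b)" for j
  have split: "(\<Sum>j<N. if e - 1 - of_nat j \<in> negative_Ints then s3 (rGamma (e + 1)) (W j) else 0)
      + (\<Sum>j<N. if e - 1 - of_nat j \<in> negative_Ints then 0 else s3 (rGamma (e + 1)) (W j))
      = s3 (rGamma (e + 1)) (\<Sum>j<N. W j)"
    unfolding sum_if_add_sum_if_not by (simp add: W3.scale_sum_right)
  show "ibr s3 Yi (act1 (-1) v a) b e
      = eTd sV s3 (act3 (-1)) TV v (ibr s3 Yi a b) e + eTd s1 s2 (Yi (-1)) T1 a (lbr s2 act2 v b) e
        + fint s3 (ibr_mu s3 Yi a (lbr_diff s2 act2 v b)) e"
    unfolding eTd_act3_ibr eTd_Yi_lbr[OF N] fint_ibr_mu_lbr_diff[OF N] W_def[symmetric] add.assoc split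
    by (simp add: ibr_def Yi_act1_minus_one[OF N] W_def W3.scale_right_distrib)
qed

end

theorem proposition3p6:
  fixes S :: "complex set"
    and sV :: "complex \<Rightarrow> 'v::ab_group_add \<Rightarrow> 'v" and vac :: 'v and TV :: "'v \<Rightarrow> 'v"
    and Y :: "int \<Rightarrow> 'v \<Rightarrow> 'v \<Rightarrow> 'v"
    and s1 :: "complex \<Rightarrow> 'm1::ab_group_add \<Rightarrow> 'm1" and T1 :: "'m1 \<Rightarrow> 'm1"
    and act1 :: "int \<Rightarrow> 'v \<Rightarrow> 'm1 \<Rightarrow> 'm1"
    and s2 :: "complex \<Rightarrow> 'm2::ab_group_add \<Rightarrow> 'm2" and T2 :: "'m2 \<Rightarrow> 'm2"
    and act2 :: "int \<Rightarrow> 'v \<Rightarrow> 'm2 \<Rightarrow> 'm2"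
    and s3 :: "complex \<Rightarrow> 'm3::ab_group_add \<Rightarrow> 'm3" and T3 :: "'m3 \<Rightarrow> 'm3"
    and act3 :: "int \<Rightarrow> 'v \<Rightarrow> 'm3 \<Rightarrow> 'm3"
    and Yi :: "complex \<Rightarrow> 'm1 \<Rightarrow> 'm2 \<Rightarrow> 'm3"
  assumes S_shift: "\<forall>s\<in>S. \<forall>k::int. s + of_int k \<in> S"
    and S_fin: "\<exists>F. finite F \<and> S \<subseteq> {f + of_int k | f k. f \<in> F}"
    and VA: "vertex_algebra sV vac TV Y"
    and M1: "va_module sV vac Y s1 T1 act1"
    and M2: "va_module sV vac Y s2 T2 act2"
    and M3: "va_module sV vac Y s3 T3 act3"
    and I: "intertwining S s1 s2 s3 T1 T2 T3 act1 act2 act3 Yi"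
  shows "\<forall>v a b.
    lbr s3 act3 v (Yi (-1) a b)
      = (\<lambda>p. Yi (-1) a (lbr s2 act2 v b p) + Yi (-1) (lbr s1 act1 v a p) b
             + fint s3 (\<lambda>p' q. ibr0 s3 Yi (lbr s1 act1 v a p') b q) p)
  \<and> ibr s3 Yi (act1 (-1) v a) b
      = (\<lambda>p. eTd sV s3 (act3 (-1)) TV v (ibr s3 Yi a b) p
             + eTd s1 s2 (Yi (-1)) T1 a (lbr s2 act2 v b) p
             + fint s3 (ibr_mu s3 Yi a (lbr_diff s2 act2 v b)) p)
  \<and> ibr s3 Yi a (act2 (-1) v b)
      = (\<lambda>p. act3 (-1) v (ibr s3 Yi a b p) + Yi (-1) (ibr_rev s1 T1 act1 a v p) b
             + fint s3 (\<lambda>p' q. ibr s3 Yi (ibr_rev s1 T1 act1 a v p') b q) p)"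
proof -
  interpret va_intertwining sV vac TV Y s1 T1 act1 s2 T2 act2 s3 T3 act3 Yi S
    using VA M1 M2 M3 I by unfold_locales
  show ?thesis
    using lbr_product ibr_product_left ibr_product_right by blast
qed

end
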